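(* Let $X$ be a locally compact metrizable space, and write $X = X_p \cup X_s$ for its unique decomposition into a disjoint union of a perfect set $X_p$ and a scattered set $X_s$. Then the hypocompact radical of the commutative Banach algebra $C_0(X)$ is $$C_0(X)_{hc} = \{ f \in C_0(X) : f(x) = 0 \text{ for all } x \in X_p \}.$$
   Context: For a Banach algebra $\mathcal B$, an element $a\in\mathcal B$ is called compact if the map $M_{a,a}:\mathcal B\to\mathcal B$, $x\mapsto axa$, is a compact operator. A Banach algebra $\mathcal B$ is hypocompact if every nonzero quotient $\mathcal B/\mathcal J$ by a closed two-sided ideal $\mathcal J$ contains a nonzero compact element; an ideal is hypocompact if it is hypocompact as an algebra. Every Banach algebra $\mathcal B$ has a largest hypocompact ideal, which is closed; it is called the hypocompact radical and denoted $\mathcal B_{hc}$. A subset $Y$ of a topological space is dense in itself if it has no isolated points (in the relative topology), perfect if it is closed and dense in itself, and scattered if it contains no nonempty dense-in-itself subsets. Every space $X$ is uniquely the disjoint union $X=X_p\cup X_s$ of a perfect set $X_p$ and a scattered set $X_s$. *)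

theory Defs
  imports "HOL-Analysis.Analysis"
begin

definition dense_in_itself :: "'a::topological_space set \<Rightarrow> bool" where
  "dense_in_itself Y \<longleftrightarrow> (\<forall>y\<in>Y. y islimpt Y)"

definition perfect_set :: "'a::topological_space set \<Rightarrow> bool" where
  "perfect_set Y \<longleftrightarrow> closed Y \<and> dense_in_itself Y"

definition scattered_set :: "'a::topological_space set \<Rightarrow> bool" where
  "scattered_set S \<longleftrightarrow> (\<forall>Y. Y \<subseteq> S \<and> Y \<noteq> {} \<longrightarrow> \<not> dense_in_itself Y)"

definition perfect_part :: "'a::topological_space set" where
  "perfect_part = (THE P. perfect_set P \<and> scattered_set (UNIV - P))"

definition C0 :: "('a::topological_space \<Rightarrow> complex) set" where
  "C0 = {f. continuous_on UNIV f \<and> (\<forall>e>0. compact {x. e \<le> norm (f x)})}"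

definition supn :: "('a \<Rightarrow> complex) \<Rightarrow> real" where
  "supn f = (SUP x. norm (f x))"

definition qnorm :: "('a \<Rightarrow> complex) set \<Rightarrow> ('a \<Rightarrow> complex) \<Rightarrow> real" where
  "qnorm J f = (INF g\<in>J. supn (\<lambda>x. f x - g x))"

definition ideal_of :: "('a \<Rightarrow> complex) set \<Rightarrow> ('a \<Rightarrow> complex) set \<Rightarrow> bool" where
  "ideal_of A I \<longleftrightarrow> I \<subseteq> A \<and> (\<lambda>x. 0) \<in> I
     \<and> (\<forall>f\<in>I. \<forall>g\<in>I. (\<lambda>x. f x + g x) \<in> I)
     \<and> (\<forall>c. \<forall>f\<in>I. (\<lambda>x. c * f x) \<in> I)
     \<and> (\<forall>a\<in>A. \<forall>f\<in>I. (\<lambda>x. a x * f x) \<in> I \<and> (\<lambda>x. f x * a x) \<in> I)"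

definition closed_ideal_of :: "('a \<Rightarrow> complex) set \<Rightarrow> ('a \<Rightarrow> complex) set \<Rightarrow> bool" where
  "closed_ideal_of A J \<longleftrightarrow> ideal_of A J
     \<and> (\<forall>f\<in>A. (\<forall>e>0. \<exists>g\<in>J. supn (\<lambda>x. f x - g x) < e) \<longrightarrow> f \<in> J)"

text \<open>The coset a + J is a compact element of A/J: the operator
  x + J \<mapsto> a x a + J maps the closed unit ball of A/J onto a totally
  bounded (precompact) subset of A/J.\<close>
definition compact_elem :: "('a \<Rightarrow> complex) set \<Rightarrow> ('a \<Rightarrow> complex) set \<Rightarrow> ('a \<Rightarrow> complex) \<Rightarrow> bool" where
  "compact_elem A J a \<longleftrightarrow>
     (\<forall>e>0. \<exists>F. finite F \<and> F \<subseteq> A \<and>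
        (\<forall>x\<in>A. qnorm J x \<le> 1 \<longrightarrow> (\<exists>y\<in>F. qnorm J (\<lambda>t. a t * x t * a t - y t) < e)))"

definition hypocompact :: "('a \<Rightarrow> complex) set \<Rightarrow> bool" where
  "hypocompact A \<longleftrightarrow>
     (\<forall>J. closed_ideal_of A J \<and> J \<noteq> A \<longrightarrow> (\<exists>a\<in>A. a \<notin> J \<and> compact_elem A J a))"

definition hc_radical :: "('a \<Rightarrow> complex) set \<Rightarrow> ('a \<Rightarrow> complex) set" where
  "hc_radical A = (THE I. ideal_of A I \<and> hypocompact I
      \<and> (\<forall>K. ideal_of A K \<and> hypocompact K \<longrightarrow> K \<subseteq> I))"

end

theory Submission
  imports Defs
begin

text \<open>
  The functions vanishing on the perfect part P form a hypocompact ideal. A closed ideal J of it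
  contains every function vanishing on its hull, so if J is proper its hull meets the scattered
  part and therefore has an isolated point z outside P. A bump a at z, supported away from P and
  from the rest of the hull, satisfies a x a = x(z) a^2 modulo J, so a is a nonzero compact
  element of the quotient.

  Conversely, let K be a hypocompact ideal and J the functions in K vanishing on P. A compact
  element a of K/J can be bounded away from zero at only finitely many points of P: peaks at
  more points than the size of an \<epsilon>-net would produce elements a x a that no finite net covers.
  As every point of P is a limit point of P, a vanishes on P, so a \<in> J; hence K = J.
\<close>

section \<open>The perfect kernel\<close>

definition perfect_kernel :: "'a::topological_space set" where
  "perfect_kernel = \<Union>{D. dense_in_itself D}"

lemma dense_in_itself_subset_perfect_kernel: "dense_in_itself D \<Longrightarrow> D \<subseteq> perfect_kernel"
  unfolding perfect_kernel_def by blast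

lemma dense_in_itself_perfect_kernel: "dense_in_itself perfect_kernel"
  unfolding dense_in_itself_def[of perfect_kernel]
proof
  fix y assume "y \<in> perfect_kernel"
  then obtain D where D: "dense_in_itself D" "y \<in> D" unfolding perfect_kernel_def by blast
  then have "y islimpt D" unfolding dense_in_itself_def by blast
  then show "y islimpt perfect_kernel"
    by (rule islimpt_subset) (rule dense_in_itself_subset_perfect_kernel[OF D(1)])
qed

lemma dense_in_itself_closure: "dense_in_itself D \<Longrightarrow> dense_in_itself (closure D)"
  unfolding dense_in_itself_def[of "closure D"]
proof
  fix y assume D: "dense_in_itself D" and "y \<in> closure D"
  then have "y islimpt D" unfolding dense_in_itself_def closure_def by blast
  then show "y islimpt closure D" using closure_subset by (rule islimpt_subset)
qed

lemma perfect_set_perfect_kernel: "perfect_set perfect_kernel"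
proof -
  have "closure perfect_kernel \<subseteq> perfect_kernel"
    by (intro dense_in_itself_subset_perfect_kernel dense_in_itself_closure
        dense_in_itself_perfect_kernel)
  then show ?thesis
    unfolding perfect_set_def using closure_subset_eq dense_in_itself_perfect_kernel by blast
qed

lemma scattered_set_Diff_perfect_kernel: "scattered_set (UNIV - perfect_kernel)"
  unfolding scattered_set_def
proof (intro allI impI notI)
  fix Y assume "Y \<subseteq> UNIV - perfect_kernel \<and> Y \<noteq> {}" "dense_in_itself Y"
  then show False using dense_in_itself_subset_perfect_kernel[of Y] by blast
qed

lemma perfect_part_eq_perfect_kernel: "perfect_part = perfect_kernel"
  unfolding perfect_part_def
proof (rule the_equality)
  show "perfect_set perfect_kernel \<and> scattered_set (UNIV - perfect_kernel)"
    using perfect_set_perfect_kernel scattered_set_Diff_perfect_kernel by blast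
  fix P :: "'a set" assume P: "perfect_set P \<and> scattered_set (UNIV - P)"
  have "P \<subseteq> perfect_kernel"
    using P unfolding perfect_set_def by (intro dense_in_itself_subset_perfect_kernel) blast
  have "dense_in_itself (perfect_kernel - P)"
    unfolding dense_in_itself_def[of "perfect_kernel - P"]
  proof
    fix y assume y: "y \<in> perfect_kernel - P"
    have open_compl: "open (- P)" using P unfolding perfect_set_def by blast
    have "dense_in_itself (perfect_kernel :: 'a set)" by (rule dense_in_itself_perfect_kernel)
    then have "y islimpt perfect_kernel" using y unfolding dense_in_itself_def by blast
    then show "y islimpt perfect_kernel - P"
    proof (rule islimptI[OF islimptE])
      fix T assume "y \<in> T" "open T"
      then show "y \<in> T \<inter> - P" "open (T \<inter> - P)" using y open_compl by auto
    qed auto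
  qed
  moreover have "perfect_kernel - P \<subseteq> UNIV - P" by blast
  ultimately have "perfect_kernel - P = {}" using P unfolding scattered_set_def by blast
  with \<open>P \<subseteq> perfect_kernel\<close> show "P = perfect_kernel" by blast
qed

lemma C0_continuous: "f \<in> C0 \<Longrightarrow> continuous_on UNIV f"
  unfolding C0_def by auto

lemma C0_compact_level: "f \<in> C0 \<Longrightarrow> e > 0 \<Longrightarrow> compact {x. e \<le> norm (f x)}"
  unfolding C0_def by auto

lemma C0I:
  assumes cont: "continuous_on UNIV g"
    and small: "\<And>e. e > 0 \<Longrightarrow> \<exists>S. compact S \<and> {x. e \<le> norm (g x)} \<subseteq> S"
  shows "g \<in> C0"
proof -
  have "compact {x. e \<le> norm (g x)}" if e: "e > 0" for e
  proof -
    obtain S where "compact S" "{x. e \<le> norm (g x)} \<subseteq> S" using small[OF e] by blast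
    moreover have "closed {x. e \<le> norm (g x)}"
      by (intro closed_Collect_le continuous_on_const continuous_on_norm cont)
    ultimately show ?thesis by (metis compact_Int_closed inf.absorb_iff2)
  qed
  then show ?thesis unfolding C0_def using cont by blast
qed

lemma bounded_range_C0: "f \<in> C0 \<Longrightarrow> bounded (range f)"
proof -
  assume f: "f \<in> C0"
  have "compact (f ` {x. 1 \<le> norm (f x)})"
    using C0_compact_level[OF f, of 1] C0_continuous[OF f]
    by (intro compact_continuous_image) (auto intro: continuous_on_subset)
  then have "bounded (f ` {x. 1 \<le> norm (f x)})" by (rule compact_imp_bounded)
  then obtain B where B: "\<forall>y\<in>f ` {x. 1 \<le> norm (f x)}. norm y \<le> B"
    unfolding bounded_iff by blast
  have "norm (f x) \<le> max 1 B" for x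
    using B by (cases "1 \<le> norm (f x)") force+
  then show ?thesis unfolding bounded_iff by blast
qed

lemma C0_mult_bounded:
  assumes b: "continuous_on UNIV b" "\<And>x. norm (b x) \<le> B" and f: "f \<in> C0"
  shows "(\<lambda>x. b x * f x) \<in> C0"
proof (rule C0I)
  show "continuous_on UNIV (\<lambda>x. b x * f x)"
    using b(1) C0_continuous[OF f] by (intro continuous_intros)
  fix e :: real assume e: "e > 0"
  have "{x. e \<le> norm (b x * f x)} \<subseteq> {x. e / (\<bar>B\<bar> + 1) \<le> norm (f x)}"
  proof safe
    fix x assume "e \<le> norm (b x * f x)"
    also have "\<dots> \<le> (\<bar>B\<bar> + 1) * norm (f x)"
      unfolding norm_mult using b(2)[of x] by (intro mult_right_mono) auto
    finally show "e / (\<bar>B\<bar> + 1) \<le> norm (f x)"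
      by (simp add: divide_le_eq mult.commute add_nonneg_pos)
  qed
  then show "\<exists>S. compact S \<and> {x. e \<le> norm (b x * f x)} \<subseteq> S"
    using C0_compact_level[OF f] e by (meson add_nonneg_pos abs_ge_zero divide_pos_pos zero_less_one)
qed

lemma C0_mult: "f \<in> C0 \<Longrightarrow> g \<in> C0 \<Longrightarrow> (\<lambda>x. f x * g x) \<in> C0"
  using bounded_range_C0[of f] C0_continuous[of f] C0_mult_bounded[of f _ g]
  unfolding bounded_iff by blast

lemma C0_scale: "f \<in> C0 \<Longrightarrow> (\<lambda>x. c * f x) \<in> C0"
  using C0_mult_bounded[of "\<lambda>_. c" "norm c" f] by simp

lemma C0_zero: "(\<lambda>x. 0) \<in> C0"
  by (rule C0I) auto

lemma C0_add:
  assumes f: "f \<in> C0" and g: "g \<in> C0"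
  shows "(\<lambda>x. f x + g x) \<in> C0"
proof (rule C0I)
  show "continuous_on UNIV (\<lambda>x. f x + g x)"
    using C0_continuous[OF f] C0_continuous[OF g] by (intro continuous_intros)
  fix e :: real assume e: "e > 0"
  have "{x. e \<le> norm (f x + g x)} \<subseteq> {x. e/2 \<le> norm (f x)} \<union> {x. e/2 \<le> norm (g x)}"
  proof
    fix x assume "x \<in> {x. e \<le> norm (f x + g x)}"
    then have "e \<le> norm (f x) + norm (g x)" using norm_triangle_ineq order_trans by blast
    then show "x \<in> {x. e/2 \<le> norm (f x)} \<union> {x. e/2 \<le> norm (g x)}" by auto
  qed
  moreover have "compact ({x. e/2 \<le> norm (f x)} \<union> {x. e/2 \<le> norm (g x)})"
    using C0_compact_level[OF f, of "e/2"] C0_compact_level[OF g, of "e/2"] e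
    by (intro compact_Un) auto
  ultimately show "\<exists>S. compact S \<and> {x. e \<le> norm (f x + g x)} \<subseteq> S" by blast
qed

lemma C0_diff: "f \<in> C0 \<Longrightarrow> g \<in> C0 \<Longrightarrow> (\<lambda>x. f x - g x) \<in> C0"
  using C0_add[OF _ C0_scale, of f g "-1"] by simp

lemma C0_cnj:
  assumes f: "f \<in> C0" shows "(\<lambda>x. cnj (f x)) \<in> C0"
proof (rule C0I)
  show "continuous_on UNIV (\<lambda>x. cnj (f x))"
    using C0_continuous[OF f] by (intro continuous_intros)
qed (use C0_compact_level[OF f] in auto)

lemma norm_le_supn: "f \<in> C0 \<Longrightarrow> norm (f x) \<le> supn f"
  unfolding supn_def using bounded_range_C0[of f]
  by (auto intro!: cSUP_upper bdd_aboveI2 simp: bounded_iff)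

lemma supn_le: "(\<And>x. norm (f x) \<le> B) \<Longrightarrow> supn f \<le> B"
  unfolding supn_def by (auto intro!: cSUP_least)

lemma qnorm_le_supn_diff:
  assumes "g \<in> J" "J \<subseteq> C0" "f \<in> C0"
  shows "qnorm J f \<le> supn (\<lambda>x. f x - g x)"
  unfolding qnorm_def
proof (rule cINF_lower[OF _ assms(1)])
  have "0 \<le> supn (\<lambda>x. f x - g x)" if "g \<in> J" for g
    using norm_le_supn[OF C0_diff[OF \<open>f \<in> C0\<close>, of g]] that assms(2) norm_ge_zero
    by (meson order_trans subsetD)
  then show "bdd_below ((\<lambda>g. supn (\<lambda>x. f x - g x)) ` J)" by (intro bdd_belowI2)
qed

lemma qnorm_le_supn: "(\<lambda>x. 0) \<in> J \<Longrightarrow> J \<subseteq> C0 \<Longrightarrow> f \<in> C0 \<Longrightarrow> qnorm J f \<le> supn f"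
  using qnorm_le_supn_diff[of "\<lambda>x. 0" J f] by simp

lemma norm_le_qnorm:
  assumes "J \<noteq> {}" "J \<subseteq> C0" "f \<in> C0" and hull: "\<And>g. g \<in> J \<Longrightarrow> g t = 0"
  shows "norm (f t) \<le> qnorm J f"
  unfolding qnorm_def
proof (rule cINF_greatest[OF assms(1)])
  fix g assume g: "g \<in> J"
  show "norm (f t) \<le> supn (\<lambda>x. f x - g x)"
    using norm_le_supn[OF C0_diff[OF assms(3), of g], of t] hull[OF g] g assms(2) by auto
qed

lemma ideal_of_subset: "ideal_of A I \<Longrightarrow> I \<subseteq> A"
  unfolding ideal_of_def by blast

lemma ideal_of_zero: "ideal_of A I \<Longrightarrow> (\<lambda>x. 0) \<in> I"
  unfolding ideal_of_def by blast

lemma ideal_of_add: "ideal_of A I \<Longrightarrow> f \<in> I \<Longrightarrow> g \<in> I \<Longrightarrow> (\<lambda>x. f x + g x) \<in> I"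
  unfolding ideal_of_def by blast

lemma ideal_of_scale: "ideal_of A I \<Longrightarrow> f \<in> I \<Longrightarrow> (\<lambda>x. c * f x) \<in> I"
  unfolding ideal_of_def by blast

lemma ideal_of_mult_left: "ideal_of A I \<Longrightarrow> a \<in> A \<Longrightarrow> f \<in> I \<Longrightarrow> (\<lambda>x. a x * f x) \<in> I"
  unfolding ideal_of_def by blast

definition C0_vanishing :: "'a::topological_space set \<Rightarrow> ('a \<Rightarrow> complex) set" where
  "C0_vanishing P = {f \<in> C0. \<forall>x\<in>P. f x = 0}"

lemma C0_vanishing_subset_C0: "C0_vanishing P \<subseteq> C0"
  unfolding C0_vanishing_def by blast

lemma ideal_C0_vanishing: "ideal_of C0 (C0_vanishing P)"
  unfolding ideal_of_def C0_vanishing_def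
  by (auto intro: C0_zero C0_add C0_scale C0_mult)

lemma hc_radical_eqI:
  assumes "ideal_of A I" "hypocompact I"
    and "\<And>K. ideal_of A K \<Longrightarrow> hypocompact K \<Longrightarrow> K \<subseteq> I"
  shows "hc_radical A = I"
  unfolding hc_radical_def using assms by (intro the_equality) (auto intro: subset_antisym)

definition bump :: "'a::metric_space \<Rightarrow> real \<Rightarrow> 'a \<Rightarrow> real" where
  "bump z r t = max 0 (1 - dist t z / r)"

lemma continuous_on_bump: "r > 0 \<Longrightarrow> continuous_on UNIV (bump z r)"
  unfolding bump_def by (intro continuous_intros) auto

lemma bump_nonneg: "0 \<le> bump z r t"
  unfolding bump_def by simp

lemma bump_le_one: "0 \<le> r \<Longrightarrow> bump z r t \<le> 1"
  unfolding bump_def by simp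

lemma bump_center [simp]: "bump z r z = 1"
  unfolding bump_def by simp

lemma bump_eq_0: "r > 0 \<Longrightarrow> r \<le> dist t z \<Longrightarrow> bump z r t = 0"
  unfolding bump_def by (simp add: le_divide_eq)

lemma bump_support: "r > 0 \<Longrightarrow> bump z r t \<noteq> 0 \<Longrightarrow> dist t z < r"
  using bump_eq_0[of r t z] by force

section \<open>Functions vanishing on a closed set with scattered complement\<close>

lemma ideal_of_sum:
  assumes "ideal_of A J" "finite G" "\<And>g. g \<in> G \<Longrightarrow> f g \<in> J"
  shows "(\<lambda>t. \<Sum>g\<in>G. f g t) \<in> J"
  using assms(2,3)
proof (induction G rule: finite_induct)
  case empty
  then show ?case using ideal_of_zero[OF assms(1)] by simp
next
  case (insert g G)
  then show ?case using ideal_of_add[OF assms(1)] by simp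
qed

lemma ideal_element_positive_on_compact:
  fixes J :: "('a::topological_space \<Rightarrow> complex) set"
  assumes J: "ideal_of (C0_vanishing P) J" and K: "compact K"
    and cover: "\<And>t. t \<in> K \<Longrightarrow> \<exists>g\<in>J. g t \<noteq> 0"
  obtains j m where "(\<lambda>t. complex_of_real (j t)) \<in> J" "continuous_on UNIV j"
    "\<And>t. 0 \<le> j t" "m > 0" "\<And>t. t \<in> K \<Longrightarrow> m \<le> j t"
proof -
  have JC: "J \<subseteq> C0" using ideal_of_subset[OF J] C0_vanishing_subset_C0 by blast
  have "open {x. g x \<noteq> 0}" if "g \<in> J" for g
    using that JC C0_continuous by (intro open_Collect_neq continuous_intros) auto
  moreover have "K \<subseteq> (\<Union>g\<in>J. {x. g x \<noteq> 0})" using cover by blast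
  ultimately obtain G where G: "G \<subseteq> J" "finite G" "K \<subseteq> (\<Union>g\<in>G. {x. g x \<noteq> 0})"
    using compactE_image[OF K] by metis
  define j where "j t = (\<Sum>g\<in>G. (norm (g t))\<^sup>2)" for t
  have "(\<lambda>t. \<Sum>g\<in>G. cnj (g t) * g t) \<in> J"
  proof (rule ideal_of_sum[OF J G(2)])
    fix g assume "g \<in> G"
    then have "g \<in> J" "(\<lambda>t. cnj (g t)) \<in> C0_vanishing P"
      using G(1) ideal_of_subset[OF J] C0_cnj unfolding C0_vanishing_def by auto
    then show "(\<lambda>t. cnj (g t) * g t) \<in> J" by (rule ideal_of_mult_left[OF J, rotated])
  qed
  moreover have "cnj z * z = complex_of_real ((norm z)\<^sup>2)" for z
    by (metis complex_norm_square mult.commute)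
  ultimately have jJ: "(\<lambda>t. complex_of_real (j t)) \<in> J" by (simp add: j_def)
  have j_cont: "continuous_on UNIV j"
    unfolding j_def using G JC C0_continuous by (intro continuous_intros) auto
  have j_nonneg: "0 \<le> j t" for t unfolding j_def by (simp add: sum_nonneg)
  show ?thesis
  proof (cases "K = {}")
    case True
    then show ?thesis using that[OF jJ j_cont j_nonneg, of 1] by simp
  next
    case False
    obtain t0 where t0: "t0 \<in> K" "\<And>t. t \<in> K \<Longrightarrow> j t0 \<le> j t"
      using continuous_attains_inf[OF K False continuous_on_subset[OF j_cont]] by blast
    obtain g0 where "g0 \<in> G" "g0 t0 \<noteq> 0" using G(3) t0(1) by blast
    then have "0 < (norm (g0 t0))\<^sup>2" "(norm (g0 t0))\<^sup>2 \<le> j t0"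
      unfolding j_def using G(2) by (auto intro: member_le_sum)
    then have "0 < j t0" by linarith
    then show ?thesis using that[OF jJ j_cont j_nonneg] t0(2) by blast
  qed
qed

text \<open>Given j \<in> J with j \<ge> m > 0 on the compact set where |h| \<ge> e/2, the elements
  h j/(j + \<delta>) of J approximate h uniformly.\<close>
lemma closed_ideal_contains_vanishing_on_hull:
  fixes J :: "('a::topological_space \<Rightarrow> complex) set"
  assumes J: "closed_ideal_of (C0_vanishing P) J" and h: "h \<in> C0_vanishing P"
    and hull: "\<And>t. \<forall>g\<in>J. g t = 0 \<Longrightarrow> h t = 0"
  shows "h \<in> J"
proof -
  have J_ideal: "ideal_of (C0_vanishing P) J" using J unfolding closed_ideal_of_def by blast
  have hC: "h \<in> C0" using h C0_vanishing_subset_C0 by blast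
  define B where "B = supn h"
  have hB: "norm (h t) \<le> B" for t unfolding B_def by (rule norm_le_supn[OF hC])
  have B_nonneg: "0 \<le> B" using hB[of undefined] norm_ge_zero order_trans by blast
  have "\<exists>g\<in>J. supn (\<lambda>x. h x - g x) < e" if e: "e > 0" for e
  proof -
    define \<epsilon> where "\<epsilon> = e / 2"
    have \<epsilon>: "\<epsilon> > 0" "\<epsilon> < e" using e unfolding \<epsilon>_def by auto
    define K where "K = {x. \<epsilon> \<le> norm (h x)}"
    have K_compact: "compact K" unfolding K_def by (rule C0_compact_level[OF hC \<epsilon>(1)])
    have K_cover: "\<exists>g\<in>J. g t \<noteq> 0" if "t \<in> K" for t
      using that hull \<epsilon>(1) unfolding K_def by force
    obtain j m where jJ: "(\<lambda>t. complex_of_real (j t)) \<in> J"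
      and j: "continuous_on UNIV j" "\<And>t. 0 \<le> j t" and m: "m > 0" "\<And>t. t \<in> K \<Longrightarrow> m \<le> j t"
      using ideal_element_positive_on_compact[OF J_ideal K_compact K_cover] by blast
    define \<delta> where "\<delta> = m * \<epsilon> / (B + 1)"
    have \<delta>: "\<delta> > 0" unfolding \<delta>_def using m \<epsilon> B_nonneg by simp
    have den: "j t + \<delta> > 0" for t using j(2)[of t] \<delta> by simp
    define q where "q t = complex_of_real (1 / (j t + \<delta>)) * h t" for t
    have "q \<in> C0"
      unfolding q_def
    proof (rule C0_mult_bounded[OF _ _ hC])
      show "continuous_on UNIV (\<lambda>t. complex_of_real (1 / (j t + \<delta>)))"
        using j(1) den by (intro continuous_intros) (auto simp: less_le)
      show "norm (complex_of_real (1 / (j t + \<delta>))) \<le> 1 / \<delta>" for t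
      proof -
        have "1 / (j t + \<delta>) \<le> 1 / \<delta>" using j(2)[of t] \<delta> by (intro divide_left_mono) auto
        then show ?thesis unfolding norm_of_real using den[of t] by simp
      qed
    qed
    moreover have "\<forall>x\<in>P. q x = 0" using h unfolding q_def C0_vanishing_def by simp
    ultimately have "q \<in> C0_vanishing P" unfolding C0_vanishing_def by blast
    then have gJ: "(\<lambda>t. q t * complex_of_real (j t)) \<in> J"
      by (rule ideal_of_mult_left[OF J_ideal _ jJ])
    have "norm (h t - q t * complex_of_real (j t)) \<le> \<epsilon>" for t
    proof -
      have "\<delta> / (j t + \<delta>) = 1 - 1 / (j t + \<delta>) * j t"
        using den[of t] by (simp add: field_simps)
      then have "complex_of_real (\<delta> / (j t + \<delta>))
          = 1 - complex_of_real (1 / (j t + \<delta>)) * complex_of_real (j t)"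
        by (simp only: of_real_diff of_real_mult of_real_1)
      then have diff: "h t - q t * complex_of_real (j t) = complex_of_real (\<delta> / (j t + \<delta>)) * h t"
        unfolding q_def by algebra
      have pos: "0 < \<delta> / (j t + \<delta>)" using den[of t] \<delta> by simp
      have eq: "norm (h t - q t * complex_of_real (j t)) = \<delta> / (j t + \<delta>) * norm (h t)"
        by (simp only: diff norm_mult norm_of_real abs_of_pos[OF pos])
      show ?thesis
      proof (cases "t \<in> K")
        case True
        have "\<delta> / (j t + \<delta>) * norm (h t) \<le> \<delta> / m * B"
          using m(2)[OF True] \<delta> m(1) j(2)[of t] hB[of t]
          by (intro mult_mono frac_le) auto
        also have "\<dots> = \<epsilon> * (B / (B + 1))" unfolding \<delta>_def using m(1) B_nonneg by simp
        also have "\<dots> \<le> \<epsilon>" by (rule mult_left_le) (use \<epsilon>(1) B_nonneg in auto)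
        finally show ?thesis using eq by simp
      next
        case False
        then have "norm (h t) \<le> \<epsilon>" unfolding K_def by simp
        moreover have "\<delta> / (j t + \<delta>) \<le> 1" using j(2)[of t] \<delta> by simp
        ultimately have "\<delta> / (j t + \<delta>) * norm (h t) \<le> 1 * \<epsilon>"
          by (intro mult_mono) auto
        then show ?thesis using eq by simp
      qed
    qed
    then have "supn (\<lambda>t. h t - q t * complex_of_real (j t)) \<le> \<epsilon>" by (rule supn_le)
    then show ?thesis using gJ \<epsilon>(2) by force
  qed
  then show ?thesis using J h unfolding closed_ideal_of_def by blast
qed

lemma hull_of_proper_closed_ideal:
  assumes J: "closed_ideal_of (C0_vanishing P) J" and proper: "J \<noteq> C0_vanishing P"
  shows "\<exists>z. z \<notin> P \<and> (\<forall>g\<in>J. g z = 0)"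
proof (rule ccontr)
  assume no_point: "\<nexists>z. z \<notin> P \<and> (\<forall>g\<in>J. g z = 0)"
  have "h \<in> J" if h: "h \<in> C0_vanishing P" for h
  proof (rule closed_ideal_contains_vanishing_on_hull[OF J h])
    fix t assume "\<forall>g\<in>J. g t = 0"
    then have "t \<in> P" using no_point by blast
    then show "h t = 0" using h unfolding C0_vanishing_def by blast
  qed
  moreover have "J \<subseteq> C0_vanishing P"
    using J ideal_of_subset unfolding closed_ideal_of_def by blast
  ultimately show False using proper by blast
qed

lemma proper_closed_ideal_isolated_hull_point:
  assumes J: "closed_ideal_of (C0_vanishing P) J" "J \<noteq> C0_vanishing P"
    and P: "scattered_set (UNIV - P)"
  obtains z T where "z \<notin> P" "\<forall>g\<in>J. g z = 0" "open T" "z \<in> T"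
    "\<And>y. y \<notin> P \<Longrightarrow> \<forall>g\<in>J. g y = 0 \<Longrightarrow> y \<in> T \<Longrightarrow> y = z"
proof -
  define Z where "Z = {t. \<forall>g\<in>J. g t = 0}"
  have "Z - P \<noteq> {}" using hull_of_proper_closed_ideal[OF J] unfolding Z_def by blast
  then have "\<not> dense_in_itself (Z - P)" using P unfolding scattered_set_def by blast
  then obtain z where z: "z \<in> Z" "z \<notin> P" and "\<not> z islimpt Z - P"
    unfolding dense_in_itself_def by blast
  then obtain T where T: "open T" "z \<in> T" and isolated: "\<And>y. y \<in> Z - P \<Longrightarrow> y \<in> T \<Longrightarrow> y = z"
    unfolding islimpt_def by blast
  show ?thesis
  proof (rule that)
    show "z \<notin> P" "\<forall>g\<in>J. g z = 0" "open T" "z \<in> T" using z T unfolding Z_def by auto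
    show "y = z" if "y \<notin> P" "\<forall>g\<in>J. g y = 0" "y \<in> T" for y
      using isolated that unfolding Z_def by blast
  qed
qed

lemma C0_bump_within:
  fixes z :: "'a::metric_space"
  assumes "locally_compact_space (euclidean :: 'a topology)" "open V" "z \<in> V"
  obtains r where "r > 0" "(\<lambda>t. complex_of_real (bump z r t)) \<in> C0" "ball z r \<subseteq> V"
proof -
  have "\<forall>x::'a. \<exists>U. open U \<and> (\<exists>K. compact K \<and> x \<in> U \<and> U \<subseteq> K)"
    using assms(1) unfolding locally_compact_space_def by simp
  then obtain U K where "open U" "compact K" "z \<in> U" "U \<subseteq> K" by blast
  moreover have "open (U \<inter> V)" using \<open>open U\<close> assms(2) by (rule open_Int)
  ultimately obtain r0 where r0: "r0 > 0" "ball z r0 \<subseteq> U \<inter> V"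
    using assms(3) openE[of "U \<inter> V" z] by blast
  define r where "r = r0 / 2"
  have r: "r > 0" "cball z r \<subseteq> ball z r0" using r0(1) unfolding r_def by (auto simp: subset_eq)
  have "cball z r \<subseteq> K" using \<open>U \<subseteq> K\<close> r(2) r0(2) by blast
  then have "compact (cball z r)"
    using compact_Int_closed[OF \<open>compact K\<close> closed_cball[of z r]] by (simp add: inf_absorb2)
  moreover have "{t. e \<le> norm (complex_of_real (bump z r t))} \<subseteq> cball z r" if "e > 0" for e
  proof
    fix t assume "t \<in> {t. e \<le> norm (complex_of_real (bump z r t))}"
    then have "bump z r t \<noteq> 0" using that by auto
    then have "dist t z < r" by (rule bump_support[OF r(1)])
    then show "t \<in> cball z r" by (simp add: dist_commute)
  qed
  ultimately have "(\<lambda>t. complex_of_real (bump z r t)) \<in> C0"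
    using continuous_on_bump[OF r(1)] by (intro C0I continuous_on_of_real) blast+
  moreover have "ball z r \<subseteq> V" using ball_subset_cball r(2) r0(2) by blast
  ultimately show ?thesis using that r(1) by blast
qed

lemma compact_elem_rank_one:
  assumes A: "ideal_of C0 A" and J: "(\<lambda>x. 0) \<in> J" "J \<subseteq> C0"
    and hull: "\<And>g. g \<in> J \<Longrightarrow> g z = 0"
    and a: "a \<in> A" "\<And>t. norm (a t) \<le> 1"
    and rank_one: "\<And>x. x \<in> A \<Longrightarrow> (\<lambda>t. a t * x t * a t - x z * (a t * a t)) \<in> J"
  shows "compact_elem A J a"
  unfolding compact_elem_def
proof (intro allI impI)
  fix \<epsilon> :: real assume \<epsilon>: "\<epsilon> > 0"
  have "cball (0::complex) 1 \<subseteq> (\<Union>c\<in>cball 0 1. ball c \<epsilon>)" using \<epsilon> by force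
  then obtain k where k: "k \<subseteq> cball 0 1" "finite k" "cball (0::complex) 1 \<subseteq> (\<Union>c\<in>k. ball c \<epsilon>)"
    by (rule compactE_image[OF compact_cball open_ball])
  have AC: "A \<subseteq> C0" by (rule ideal_of_subset[OF A])
  have "(\<lambda>t. a t * a t) \<in> A" using a(1) AC by (intro ideal_of_mult_left[OF A]) auto
  then have F: "(\<lambda>c t. c * (a t * a t)) ` k \<subseteq> A" using ideal_of_scale[OF A] by blast
  have "\<exists>y\<in>(\<lambda>c t. c * (a t * a t)) ` k. qnorm J (\<lambda>t. a t * x t * a t - y t) < \<epsilon>"
    if x: "x \<in> A" "qnorm J x \<le> 1" for x
  proof -
    have xC: "x \<in> C0" using x(1) AC by blast
    have aC: "a \<in> C0" using a(1) AC by blast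
    have "norm (x z) \<le> qnorm J x" using J hull xC by (intro norm_le_qnorm) auto
    then have "x z \<in> cball 0 1" using x(2) by simp
    then obtain c where c: "c \<in> k" "x z \<in> ball c \<epsilon>" using k(3) by (blast elim: UN_E)
    have "(\<lambda>t. a t * x t * a t - c * (a t * a t)) \<in> C0"
      using aC xC by (intro C0_diff C0_mult C0_scale)
    then have "qnorm J (\<lambda>t. a t * x t * a t - c * (a t * a t))
        \<le> supn (\<lambda>t. (a t * x t * a t - c * (a t * a t)) - (a t * x t * a t - x z * (a t * a t)))"
      by (rule qnorm_le_supn_diff[OF rank_one[OF x(1)] J(2)])
    also have "\<dots> \<le> norm (x z - c)"
    proof (rule supn_le)
      fix t
      have "norm (a t * a t) \<le> 1" using a(2)[of t] by (simp add: norm_mult mult_le_one)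
      then have "norm (x z - c) * norm (a t * a t) \<le> norm (x z - c)"
        by (simp add: mult_left_le)
      moreover have "(a t * x t * a t - c * (a t * a t)) - (a t * x t * a t - x z * (a t * a t))
          = (x z - c) * (a t * a t)" by algebra
      ultimately show "norm ((a t * x t * a t - c * (a t * a t))
          - (a t * x t * a t - x z * (a t * a t))) \<le> norm (x z - c)"
        by (simp only: norm_mult)
    qed
    also have "\<dots> < \<epsilon>" using c(2) by (simp add: dist_norm norm_minus_commute)
    finally have "qnorm J (\<lambda>t. a t * x t * a t - c * (a t * a t)) < \<epsilon>" .
    then show ?thesis using c(1) by (intro bexI[of _ "\<lambda>t. c * (a t * a t)"]) auto
  qed
  then show "\<exists>F. finite F \<and> F \<subseteq> A \<and>
      (\<forall>x\<in>A. qnorm J x \<le> 1 \<longrightarrow> (\<exists>y\<in>F. qnorm J (\<lambda>t. a t * x t * a t - y t) < \<epsilon>))"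
    using k(2) F by (intro exI[of _ "(\<lambda>c t. c * (a t * a t)) ` k"]) blast
qed

lemma hypocompact_C0_vanishing:
  fixes P :: "'a::metric_space set"
  assumes lc: "locally_compact_space (euclidean :: 'a topology)"
    and P: "closed P" "scattered_set (UNIV - P)"
  shows "hypocompact (C0_vanishing P)"
  unfolding hypocompact_def
proof (intro allI impI)
  fix J assume "closed_ideal_of (C0_vanishing P) J \<and> J \<noteq> C0_vanishing P"
  then have J: "closed_ideal_of (C0_vanishing P) J" and proper: "J \<noteq> C0_vanishing P" by auto
  have J_ideal: "ideal_of (C0_vanishing P) J" using J unfolding closed_ideal_of_def by blast
  have JC: "J \<subseteq> C0" using ideal_of_subset[OF J_ideal] C0_vanishing_subset_C0 by blast
  obtain z T where z: "z \<notin> P" "\<forall>g\<in>J. g z = 0" and T: "open T" "z \<in> T"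
    and isolated: "\<And>y. y \<notin> P \<Longrightarrow> \<forall>g\<in>J. g y = 0 \<Longrightarrow> y \<in> T \<Longrightarrow> y = z"
    using proper_closed_ideal_isolated_hull_point[OF J proper P(2)] by blast
  obtain r where r: "r > 0" and bumpC: "(\<lambda>t. complex_of_real (bump z r t)) \<in> C0"
    and ball: "ball z r \<subseteq> T - P"
    using C0_bump_within[OF lc, of "T - P" z] T z(1) P(1) by blast
  define a where "a t = complex_of_real (bump z r t)" for t
  have support: "t \<in> T - P" if "a t \<noteq> 0" for t
  proof -
    have "dist t z < r" using that bump_support[OF r] unfolding a_def by force
    then have "t \<in> ball z r" by (simp add: dist_commute)
    then show ?thesis using ball by blast
  qed
  have aA: "a \<in> C0_vanishing P"
    using bumpC support unfolding a_def C0_vanishing_def by (auto simp: a_def)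
  have "a \<notin> J" using z(2) unfolding a_def by force
  moreover have "compact_elem (C0_vanishing P) J a"
  proof (rule compact_elem_rank_one[OF ideal_C0_vanishing ideal_of_zero[OF J_ideal] JC _ aA])
    show "g z = 0" if "g \<in> J" for g using that z(2) by blast
    show "norm (a t) \<le> 1" for t
      unfolding a_def using bump_nonneg[of z r t] bump_le_one[of r z t] r by simp
    fix x assume x: "x \<in> C0_vanishing P"
    show "(\<lambda>t. a t * x t * a t - x z * (a t * a t)) \<in> J"
    proof (rule closed_ideal_contains_vanishing_on_hull[OF J])
      have "a \<in> C0" "x \<in> C0" using aA x unfolding C0_vanishing_def by auto
      then have "(\<lambda>t. a t * x t * a t - x z * (a t * a t)) \<in> C0"
        by (intro C0_diff C0_mult C0_scale)
      then show "(\<lambda>t. a t * x t * a t - x z * (a t * a t)) \<in> C0_vanishing P"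
        using aA unfolding C0_vanishing_def by simp
      fix t assume t: "\<forall>g\<in>J. g t = 0"
      have "a t = 0" if "t \<noteq> z"
      proof (rule ccontr)
        assume "a t \<noteq> 0"
        then have "t \<in> T - P" by (rule support)
        then show False using isolated[of t] t that by blast
      qed
      then show "a t * x t * a t - x z * (a t * a t) = 0" by (cases "t = z") auto
    qed
  qed
  ultimately show "\<exists>a\<in>C0_vanishing P. a \<notin> J \<and> compact_elem (C0_vanishing P) J a"
    using aA by (intro bexI[of _ a]) auto
qed

section \<open>Hypocompact ideals vanish on dense-in-itself sets\<close>

lemma closed_ideal_Int_C0_vanishing:
  assumes K: "ideal_of C0 K"
  shows "closed_ideal_of K (K \<inter> C0_vanishing P)"
proof -
  have KC: "K \<subseteq> C0" by (rule ideal_of_subset[OF K])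
  have "ideal_of K (K \<inter> C0_vanishing P)"
    unfolding ideal_of_def
  proof (intro conjI ballI allI)
    show "(\<lambda>x. 0) \<in> K \<inter> C0_vanishing P"
      using ideal_of_zero[OF K] ideal_of_zero[OF ideal_C0_vanishing] by blast
    fix f assume f: "f \<in> K \<inter> C0_vanishing P"
    show "(\<lambda>x. c * f x) \<in> K \<inter> C0_vanishing P" for c
      using f ideal_of_scale[OF K] ideal_of_scale[OF ideal_C0_vanishing] by blast
    show "(\<lambda>x. f x + g x) \<in> K \<inter> C0_vanishing P" if "g \<in> K \<inter> C0_vanishing P" for g
      using f that ideal_of_add[OF K] ideal_of_add[OF ideal_C0_vanishing] by blast
    fix a assume "a \<in> K"
    then have "a \<in> C0" using KC by blast
    then show "(\<lambda>x. a x * f x) \<in> K \<inter> C0_vanishing P"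
      using f ideal_of_mult_left[OF K] ideal_of_mult_left[OF ideal_C0_vanishing] by blast
    then show "(\<lambda>x. f x * a x) \<in> K \<inter> C0_vanishing P" by (simp add: mult.commute)
  qed auto
  moreover have "h \<in> K \<inter> C0_vanishing P"
    if h: "h \<in> K" and approx: "\<forall>e>0. \<exists>g\<in>K \<inter> C0_vanishing P. supn (\<lambda>x. h x - g x) < e" for h
  proof -
    have "h p = 0" if p: "p \<in> P" for p
    proof (rule ccontr)
      assume "h p \<noteq> 0"
      then have "norm (h p) > 0" by simp
      then obtain g where g: "g \<in> K \<inter> C0_vanishing P" "supn (\<lambda>x. h x - g x) < norm (h p)"
        using approx by blast
      have "norm (h p) = norm (h p - g p)" using g(1) p unfolding C0_vanishing_def by simp
      also have "\<dots> \<le> supn (\<lambda>x. h x - g x)"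
        using g(1) h KC by (intro norm_le_supn C0_diff) auto
      finally show False using g(2) by simp
    qed
    then show ?thesis using h KC unfolding C0_vanishing_def by blast
  qed
  ultimately show ?thesis unfolding closed_ideal_of_def by blast
qed

lemma compact_elem_pointwise_net:
  assumes KC: "K \<subseteq> C0" and J: "J \<subseteq> C0" "J \<noteq> {}"
    and hull: "\<forall>g\<in>J. \<forall>s\<in>P. g s = 0"
    and a: "a \<in> C0" "compact_elem K J a" and \<epsilon>: "\<epsilon> > 0"
  obtains F where "finite F" "F \<subseteq> K"
    "\<And>x. x \<in> K \<Longrightarrow> qnorm J x \<le> 1 \<Longrightarrow> \<exists>y\<in>F. \<forall>s\<in>P. norm (a s * x s * a s - y s) < \<epsilon>"
proof -
  obtain F where F: "finite F" "F \<subseteq> K"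
    and net: "\<And>x. x \<in> K \<Longrightarrow> qnorm J x \<le> 1 \<Longrightarrow> \<exists>y\<in>F. qnorm J (\<lambda>t. a t * x t * a t - y t) < \<epsilon>"
    using a(2) \<epsilon> unfolding compact_elem_def by metis
  have "\<exists>y\<in>F. \<forall>s\<in>P. norm (a s * x s * a s - y s) < \<epsilon>" if x: "x \<in> K" "qnorm J x \<le> 1" for x
  proof -
    obtain y where y: "y \<in> F" "qnorm J (\<lambda>t. a t * x t * a t - y t) < \<epsilon>" using net[OF x] by blast
    have "(\<lambda>t. a t * x t * a t - y t) \<in> C0"
      using a(1) x(1) y(1) F(2) KC by (intro C0_diff C0_mult) auto
    then have "norm (a s * x s * a s - y s) \<le> qnorm J (\<lambda>t. a t * x t * a t - y t)" if "s \<in> P" for s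
      using J hull that by (intro norm_le_qnorm) auto
    then show ?thesis using y by (intro bexI[of _ y]) (auto intro: le_less_trans)
  qed
  then show ?thesis using that F by blast
qed

lemma ideal_peak_family:
  fixes S :: "'a::metric_space set"
  assumes K: "ideal_of C0 K" and a: "a \<in> K" and M: "M > 0" "\<And>t. norm (a t) \<le> M"
    and S: "finite S" "2 \<le> card S"
  obtains X where "\<And>s. s \<in> S \<Longrightarrow> X s \<in> K" "\<And>s t. norm (X s t) \<le> 1"
    "\<And>s. X s s = complex_of_real (1 / M\<^sup>2) * (a s * a s)"
    "\<And>s t. s \<in> S \<Longrightarrow> t \<in> S \<Longrightarrow> t \<noteq> s \<Longrightarrow> X s t = 0"
proof -
  define r where "r s = infdist s (S - {s})" for s
  have r: "r s > 0" if "s \<in> S" for s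
  proof -
    have "S - {s} \<noteq> {}"
    proof
      assume "S - {s} = {}"
      then have "card S \<le> card {s}" by (intro card_mono) auto
      then show False using S(2) by simp
    qed
    then show ?thesis
      unfolding r_def using S(1) by (intro infdist_pos_not_in_closed finite_imp_closed) auto
  qed
  define b where "b s t = complex_of_real (bump s (r s) t / M\<^sup>2)" for s t
  have b_norm: "norm (b s t) \<le> 1 / M\<^sup>2" for s t
  proof -
    have "bump s (r s) t \<le> 1" unfolding r_def by (intro bump_le_one infdist_nonneg)
    then have "bump s (r s) t / M\<^sup>2 \<le> 1 / M\<^sup>2" using M(1) by (intro divide_right_mono) auto
    moreover have "0 \<le> bump s (r s) t / M\<^sup>2" using bump_nonneg[of s "r s" t] by simp
    ultimately show ?thesis unfolding b_def norm_of_real by simp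
  qed
  have aC: "a \<in> C0" using a ideal_of_subset[OF K] by blast
  have "(\<lambda>t. b s t * a t * a t) \<in> K" if "s \<in> S" for s
  proof -
    have "(\<lambda>t. b s t * a t) \<in> C0"
      using continuous_on_bump[OF r[OF that]] b_norm aC M(1) unfolding b_def
      by (intro C0_mult_bounded[of _ "1 / M\<^sup>2"] continuous_intros) auto
    then show ?thesis using ideal_of_mult_left[OF K _ a] by simp
  qed
  moreover have "norm (b s t * a t * a t) \<le> 1" for s t
  proof -
    have "norm (b s t * a t * a t) \<le> 1 / M\<^sup>2 * M * M"
      unfolding norm_mult using b_norm[of s t] M by (intro mult_mono) auto
    then show ?thesis using M(1) by (simp add: power2_eq_square)
  qed
  moreover have "b s t = 0" if "s \<in> S" "t \<in> S" "t \<noteq> s" for s t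
  proof -
    have "r s \<le> dist s t" unfolding r_def using that by (intro infdist_le) auto
    then show ?thesis unfolding b_def by (simp add: bump_eq_0[OF r[OF that(1)]] dist_commute)
  qed
  moreover have "b s s * a s * a s = complex_of_real (1 / M\<^sup>2) * (a s * a s)" for s
    by (simp add: b_def)
  ultimately show ?thesis using that[of "\<lambda>s t. b s t * a t * a t"] by auto
qed

text \<open>Peaks x_s of norm at most 1 at more points s than the size of an \<epsilon>-net for the image of
  the unit ball under x \<mapsto> a x a give elements a x_s a whose values at the points s are far apart,
  so two of them cannot share a net element.\<close>
lemma finite_hull_points_compact_elem_ge:
  fixes K J :: "('a::metric_space \<Rightarrow> complex) set"
  assumes K: "ideal_of C0 K" and J: "(\<lambda>x. 0) \<in> J" "J \<subseteq> K"
    and hull: "\<forall>g\<in>J. \<forall>s\<in>P. g s = 0"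
    and a: "a \<in> K" "compact_elem K J a" and \<beta>: "\<beta> > 0"
  shows "finite {s \<in> P. \<beta> \<le> norm (a s)}"
proof (rule ccontr)
  let ?L = "{s \<in> P. \<beta> \<le> norm (a s)}"
  assume infinite: "infinite ?L"
  then obtain s0 where "s0 \<in> ?L" by (metis ex_in_conv finite.emptyI)
  have KC: "K \<subseteq> C0" by (rule ideal_of_subset[OF K])
  have aC: "a \<in> C0" using a(1) KC by blast
  define M where "M = supn a"
  have aM: "norm (a t) \<le> M" for t unfolding M_def by (rule norm_le_supn[OF aC])
  have M: "M > 0" using aM[of s0] \<open>s0 \<in> ?L\<close> \<beta> by auto
  define c where "c = \<beta> ^ 4 / M\<^sup>2"
  have "c > 0" unfolding c_def using \<beta> M by simp
  then have half_c: "c / 2 > 0" by simp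
  have JC: "J \<subseteq> C0" and Jne: "J \<noteq> {}" using J KC by auto
  obtain F where F: "finite F" "F \<subseteq> K"
    and net: "\<And>x. x \<in> K \<Longrightarrow> qnorm J x \<le> 1 \<Longrightarrow> \<exists>y\<in>F. \<forall>s\<in>P. norm (a s * x s * a s - y s) < c / 2"
    using compact_elem_pointwise_net[OF KC JC Jne hull aC a(2) half_c] by blast
  obtain S where S: "finite S" "card S = card F + 2" "S \<subseteq> ?L"
    using infinite_arbitrarily_large[OF infinite] by blast
  obtain X where X: "\<And>s. s \<in> S \<Longrightarrow> X s \<in> K" "\<And>s t. norm (X s t) \<le> 1"
    "\<And>s. X s s = complex_of_real (1 / M\<^sup>2) * (a s * a s)"
    "\<And>s t. s \<in> S \<Longrightarrow> t \<in> S \<Longrightarrow> t \<noteq> s \<Longrightarrow> X s t = 0"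
    using ideal_peak_family[OF K a(1) M aM S(1)] S(2) by auto
  have "\<exists>y\<in>F. \<forall>t\<in>P. norm (a t * X s t * a t - y t) < c / 2" if "s \<in> S" for s
  proof (rule net[OF X(1)[OF that]])
    have "qnorm J (X s) \<le> supn (X s)" using J KC X(1)[OF that] by (intro qnorm_le_supn) auto
    also have "\<dots> \<le> 1" using X(2) by (rule supn_le)
    finally show "qnorm J (X s) \<le> 1" .
  qed
  then obtain \<phi> where \<phi>: "\<And>s. s \<in> S \<Longrightarrow> \<phi> s \<in> F"
    "\<And>s t. s \<in> S \<Longrightarrow> t \<in> P \<Longrightarrow> norm (a t * X s t * a t - \<phi> s t) < c / 2"
    by metis
  have "\<not> inj_on \<phi> S"
  proof
    assume "inj_on \<phi> S"
    then have "card S \<le> card F" using \<phi>(1) F(1) by (intro card_inj_on_le) auto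
    then show False using S(2) by simp
  qed
  then obtain s1 s2 where s12: "s1 \<in> S" "s2 \<in> S" "s1 \<noteq> s2" "\<phi> s1 = \<phi> s2"
    unfolding inj_on_def by blast
  have s1: "s1 \<in> P" "\<beta> \<le> norm (a s1)" using s12(1) S(3) by auto
  have "c \<le> (norm (a s1)) ^ 4 / M\<^sup>2"
    unfolding c_def using s1(2) \<beta> M by (intro divide_right_mono power_mono) auto
  also have "\<dots> = norm (a s1 * X s1 s1 * a s1)"
  proof -
    have "a s1 * X s1 s1 * a s1 = complex_of_real (1 / M\<^sup>2) * (a s1 * a s1 * a s1 * a s1)"
      unfolding X(3) by algebra
    then have "norm (a s1 * X s1 s1 * a s1) = \<bar>1 / M\<^sup>2\<bar> * (norm (a s1)) ^ 4"
      by (simp only: norm_mult norm_of_real power4_eq_xxxx)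
    then show ?thesis by simp
  qed
  also have "\<dots> \<le> norm (a s1 * X s1 s1 * a s1 - \<phi> s1 s1) + norm (a s1 * X s2 s1 * a s1 - \<phi> s2 s1)"
    using X(4)[OF s12(2,1)] s12(3,4) norm_triangle_ineq2[of "a s1 * X s1 s1 * a s1" "\<phi> s1 s1"]
    by simp
  also have "\<dots> < c / 2 + c / 2" using \<phi>(2)[OF s12(1) s1(1)] \<phi>(2)[OF s12(2) s1(1)] by simp
  finally show False by simp
qed

lemma compact_elem_vanishes_at_limit_point:
  fixes K J :: "('a::metric_space \<Rightarrow> complex) set"
  assumes K: "ideal_of C0 K" and J: "(\<lambda>x. 0) \<in> J" "J \<subseteq> K"
    and hull: "\<forall>g\<in>J. \<forall>s\<in>P. g s = 0"
    and a: "a \<in> K" "compact_elem K J a" and p: "p islimpt P"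
  shows "a p = 0"
proof (rule ccontr)
  assume "a p \<noteq> 0"
  define \<beta> where "\<beta> = norm (a p) / 2"
  have \<beta>: "\<beta> > 0" unfolding \<beta>_def using \<open>a p \<noteq> 0\<close> by simp
  have aC: "a \<in> C0" using a(1) ideal_of_subset[OF K] by blast
  have "open {t. \<beta> < norm (a t)}"
    using C0_continuous[OF aC] by (intro open_Collect_less continuous_intros)
  moreover have "p \<in> {t. \<beta> < norm (a t)}" using \<beta> unfolding \<beta>_def by simp
  ultimately obtain \<rho> where \<rho>: "\<rho> > 0" "ball p \<rho> \<subseteq> {t. \<beta> < norm (a t)}"
    by (rule openE)
  have "P \<inter> ball p \<rho> \<subseteq> {s \<in> P. \<beta> \<le> norm (a s)}" using \<rho>(2) by fastforce
  moreover have "infinite (P \<inter> ball p \<rho>)" using p \<rho>(1) unfolding islimpt_eq_infinite_ball by blast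
  ultimately show False
    using finite_hull_points_compact_elem_ge[OF K J hull a \<beta>] finite_subset by blast
qed

lemma hypocompact_ideal_subset_C0_vanishing:
  fixes K :: "('a::metric_space \<Rightarrow> complex) set"
  assumes K: "ideal_of C0 K" "hypocompact K" and P: "dense_in_itself P"
  shows "K \<subseteq> C0_vanishing P"
proof (rule ccontr)
  assume "\<not> K \<subseteq> C0_vanishing P"
  define J where "J = K \<inter> C0_vanishing P"
  have J: "closed_ideal_of K J" unfolding J_def by (rule closed_ideal_Int_C0_vanishing[OF K(1)])
  have "J \<noteq> K" using \<open>\<not> K \<subseteq> C0_vanishing P\<close> unfolding J_def by blast
  then obtain a where a: "a \<in> K" "a \<notin> J" "compact_elem K J a"
    using K(2) J unfolding hypocompact_def by blast
  have "a \<notin> C0_vanishing P" using a unfolding J_def by blast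
  then obtain p where "p \<in> P" "a p \<noteq> 0" using a(1) ideal_of_subset[OF K(1)]
    unfolding C0_vanishing_def by blast
  moreover have "a p = 0"
  proof (rule compact_elem_vanishes_at_limit_point[OF K(1) _ _ _ a(1,3)])
    show "(\<lambda>x. 0) \<in> J" using J unfolding closed_ideal_of_def by (blast intro: ideal_of_zero)
    show "J \<subseteq> K" unfolding J_def by blast
    show "\<forall>g\<in>J. \<forall>s\<in>P. g s = 0" unfolding J_def C0_vanishing_def by blast
    show "p islimpt P" using P \<open>p \<in> P\<close> unfolding dense_in_itself_def by blast
  qed
  ultimately show False by blast
qed

theorem theorem2p2:
  assumes "locally_compact_space (euclidean :: 'a::metric_space topology)"
  shows "hc_radical (C0 :: ('a \<Rightarrow> complex) set)
           = {f \<in> C0. \<forall>x\<in>perfect_part. f x = 0}"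
proof -
  have P: "closed (perfect_part :: 'a set)" "dense_in_itself (perfect_part :: 'a set)"
    "scattered_set (UNIV - (perfect_part :: 'a set))"
    using perfect_set_perfect_kernel scattered_set_Diff_perfect_kernel
    unfolding perfect_part_eq_perfect_kernel perfect_set_def by auto
  have "hc_radical C0 = C0_vanishing (perfect_part :: 'a set)"
  proof (rule hc_radical_eqI[OF ideal_C0_vanishing])
    show "hypocompact (C0_vanishing (perfect_part :: 'a set))"
      by (rule hypocompact_C0_vanishing[OF assms P(1,3)])
    show "K \<subseteq> C0_vanishing perfect_part"
      if "ideal_of C0 K" "hypocompact K" for K :: "('a \<Rightarrow> complex) set"
      by (rule hypocompact_ideal_subset_C0_vanishing[OF that P(2)])
  qed
  then show ?thesis unfolding C0_vanishing_def .
qed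

end
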